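(* Let $\epsilon\in(0,1)$, $u_0\in\mathbb{R}$, and $h^*=\epsilon^2$. For every $h\in(0,h^*]$, let $(u_n)_{n\ge0}$ be a sequence of real numbers starting at $u_0$ and satisfying the implicit Euler scheme $$\frac{u_n-u_{n-1}}{h}+\frac{1}{\epsilon^2}\big(u_n^3-u_n\big)=0,\qquad n\ge 1.$$ Then: (i) if $u_0\in\{0,1,-1\}$, then $u_n=\mathrm{sign}(u_0)$ for all $n\ge1$; (ii) if $u_0\notin\{0,1,-1\}$, then $(u_n)$ is monotone and converges to $\mathrm{sign}(u_0)$ as $n\to\infty$.
   Context: The scheme discretizes the ODE $u'(t)+\frac{1}{\epsilon^2}(u^3-u)=0$, $u(0)=u_0$. For $h\le\epsilon^2$ each step equation has a unique real solution $u_n$, so the sequence is uniquely determined. Here $\mathrm{sign}(0)=0$. *)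

theory Defs
  imports "HOL-Analysis.Analysis"
begin

end

theory Submission
  imports Defs
begin

text \<open>Writing \<open>k = h / \<epsilon>\<^sup>2\<close>, one step of the scheme says \<open>u\<^sub>n\<^sub>-\<^sub>1 = g(u\<^sub>n)\<close> for the
  odd cubic \<open>g(x) = x + k (x\<^sup>3 - x)\<close>. For \<open>0 < k \<le> 1\<close> the map \<open>g\<close> preserves the sign of
  \<open>x\<close> and of \<open>x - 1\<close>, so every iterate lies on the same side of \<open>0\<close> and of \<open>1\<close> as \<open>u\<^sub>0\<close>;
  since \<open>g(x) - x = k x (x - 1) (x + 1)\<close>, the sequence then moves monotonically towards \<open>1\<close>
  when \<open>u\<^sub>0 > 0\<close>. Being bounded, it converges, and its limit is a positive fixed point
  of \<open>g\<close>, i.e. \<open>1\<close>. The case \<open>u\<^sub>0 < 0\<close> follows by oddness.\<close>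

definition back_step :: "real \<Rightarrow> real \<Rightarrow> real" where
  "back_step k x = x + k * (x ^ 3 - x)"

lemma implicit_euler_step_iff:
  fixes h c x y :: real
  assumes "h \<noteq> 0"
  shows "(y - x) / h + c * (y ^ 3 - y) = 0 \<longleftrightarrow> x = back_step (h * c) y"
proof -
  have "(y - x) / h + c * (y ^ 3 - y) = (y - x + h * c * (y ^ 3 - y)) / h"
    using assms by (simp add: field_simps)
  then show ?thesis
    using assms by (auto simp: back_step_def)
qed

lemma back_step_minus: "back_step k (- x) = - back_step k x"
  by (simp add: back_step_def algebra_simps)

lemma back_step_sub_self: "back_step k x - x = k * x * (x - 1) * (x + 1)"
  by (simp add: back_step_def algebra_simps power3_eq_cube)

lemma back_step_fixed_point:
  assumes "k \<noteq> 0" "back_step k x = x"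
  shows "x \<in> {-1, 0, 1}"
proof -
  have "x * (x - 1) * (x + 1) = 0"
    using assms back_step_sub_self[of k x] by simp
  then have "x = 0 \<or> x - 1 = 0 \<or> x + 1 = 0"
    by (simp only: mult_eq_0_iff disj_assoc)
  then show ?thesis
    by auto
qed

lemma sgn_back_step:
  assumes "0 \<le> k" "k \<le> 1"
  shows "sgn (back_step k x) = sgn x"
proof (cases "x = 0")
  case False
  have "back_step k x = x * ((1 - k) + k * x\<^sup>2)"
    by (simp add: back_step_def algebra_simps power2_eq_square power3_eq_cube)
  moreover have "(1 - k) + k * x\<^sup>2 > 0"
    using assms False
    by (cases "k = 0") (auto intro: add_nonneg_pos simp: mult_pos_pos)
  ultimately show ?thesis
    by (simp add: sgn_mult)
qed (simp add: back_step_def)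

lemma sgn_back_step_sub_one:
  assumes "0 \<le> k" "k < 4"
  shows "sgn (back_step k x - 1) = sgn (x - 1)"
proof -
  have "back_step k x - 1 = (x - 1) * (k * x\<^sup>2 + k * x + 1)"
    by (simp add: back_step_def algebra_simps power2_eq_square power3_eq_cube)
  moreover have "k * x\<^sup>2 + k * x + 1 > 0"
  proof -
    have "k * x\<^sup>2 + k * x + 1 = k * (x + 1/2)\<^sup>2 + (1 - k / 4)"
      by (simp add: algebra_simps power2_eq_square)
    moreover have "0 \<le> k * (x + 1/2)\<^sup>2"
      using assms by simp
    ultimately show ?thesis
      using assms by linarith
  qed
  ultimately show ?thesis
    by (simp add: sgn_mult)
qed

locale back_step_orbit =
  fixes k :: real and u :: "nat \<Rightarrow> real"
  assumes k_pos: "0 < k" and k_le_one: "k \<le> 1"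
    and prev: "\<And>n. u n = back_step k (u (Suc n))"
begin

lemma sgn_eq: "sgn (u n) = sgn (u 0)"
proof (induction n)
  case (Suc n)
  then show ?case
    using prev[of n] sgn_back_step[of k "u (Suc n)"] k_pos k_le_one by simp
qed simp

lemma sgn_sub_one_eq: "sgn (u n - 1) = sgn (u 0 - 1)"
proof (induction n)
  case (Suc n)
  then show ?case
    using prev[of n] sgn_back_step_sub_one[of k "u (Suc n)"] k_pos k_le_one by simp
qed simp

lemma uminus: "back_step_orbit k (\<lambda>n. - u n)"
proof
  show "- u n = back_step k (- u (Suc n))" for n
    by (simp add: back_step_minus prev[of n])
qed (use k_pos k_le_one in auto)

lemma limit_fixed_point:
  assumes "u \<longlonglongrightarrow> L"
  shows "L \<in> {-1, 0, 1}"
proof -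
  have "(\<lambda>n. back_step k (u (Suc n))) \<longlonglongrightarrow> back_step k L"
    unfolding back_step_def using LIMSEQ_Suc[OF assms] by (intro tendsto_intros)
  then have "u \<longlonglongrightarrow> back_step k L"
    by (simp flip: prev)
  then have "back_step k L = L"
    using assms LIMSEQ_unique by blast
  with k_pos show ?thesis
    by (intro back_step_fixed_point) auto
qed

lemma sgn_diff_Suc:
  "sgn (u n - u (Suc n)) = sgn (u (Suc n)) * sgn (u (Suc n) - 1) * sgn (u (Suc n) + 1)"
  using prev[of n] back_step_sub_self[of k "u (Suc n)"] k_pos by (simp add: sgn_mult)

lemma mono_tendsto_one_of_less_one:
  assumes "0 < u 0" "u 0 < 1"
  shows "mono u \<and> u \<longlonglongrightarrow> 1"
proof -
  have pos: "0 < u n" and less_one: "u n < 1" for n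
    using sgn_eq[of n] sgn_sub_one_eq[of n] assms by (auto simp: sgn_if split: if_splits)
  have "u n \<le> u (Suc n)" for n
    using sgn_diff_Suc[of n] pos[of "Suc n"] less_one[of "Suc n"]
    by (auto simp: sgn_if split: if_splits)
  then have mono: "mono u"
    by (simp add: mono_iff_le_Suc)
  then obtain L where L: "u \<longlonglongrightarrow> L" "\<forall>n. u n \<le> L"
    using incseq_convergent[of u 1] less_one by (auto simp: less_imp_le)
  have "L = 1"
    using limit_fixed_point[OF L(1)] L(2)[rule_format, of 0] assms by auto
  with mono L show ?thesis by simp
qed

lemma antimono_tendsto_one_of_greater_one:
  assumes "1 < u 0"
  shows "antimono u \<and> u \<longlonglongrightarrow> 1"
proof -
  have greater_one: "1 < u n" for n
    using sgn_sub_one_eq[of n] assms by (auto simp: sgn_if split: if_splits)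
  have "u (Suc n) \<le> u n" for n
    using sgn_diff_Suc[of n] greater_one[of "Suc n"] by (auto simp: sgn_if split: if_splits)
  then have antimono: "antimono u"
    by (simp add: antimono_iff_le_Suc)
  moreover have "\<forall>n. 1 \<le> u n"
    using greater_one less_imp_le by blast
  ultimately obtain L where L: "u \<longlonglongrightarrow> L"
    using decseq_convergent by blast
  have "1 \<le> L"
    using greater_one by (intro LIMSEQ_le_const[OF L]) (auto simp: less_imp_le)
  then have "L = 1"
    using limit_fixed_point[OF L] by auto
  with antimono L show ?thesis by simp
qed

lemma monotone_tendsto_one:
  assumes "0 < u 0" "u 0 \<noteq> 1"
  shows "(mono u \<or> antimono u) \<and> u \<longlonglongrightarrow> 1"
proof (cases "u 0 < 1")
  case True
  with assms show ?thesis
    using mono_tendsto_one_of_less_one by blast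
next
  case False
  with assms have "1 < u 0" by simp
  then show ?thesis
    using antimono_tendsto_one_of_greater_one by blast
qed

lemma monotone_tendsto_sgn:
  assumes "u 0 \<notin> {-1, 0, 1}"
  shows "(mono u \<or> antimono u) \<and> u \<longlonglongrightarrow> sgn (u 0)"
proof (cases "0 < u 0")
  case True
  with assms show ?thesis
    using monotone_tendsto_one by simp
next
  case False
  interpret neg: back_step_orbit k "\<lambda>n. - u n"
    by (rule uminus)
  have "0 < - u 0" "- u 0 \<noteq> 1"
    using False assms by auto
  then have "(mono (\<lambda>n. - u n) \<or> antimono (\<lambda>n. - u n)) \<and> (\<lambda>n. - u n) \<longlonglongrightarrow> 1"
    by (rule neg.monotone_tendsto_one)
  moreover have "mono (\<lambda>n. - u n) \<longleftrightarrow> antimono u" "antimono (\<lambda>n. - u n) \<longleftrightarrow> mono u"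
    by (auto simp: mono_def antimono_def)
  moreover have "sgn (u 0) = -1"
    using False assms by simp
  ultimately show ?thesis
    using tendsto_minus_cancel_left[of u 1 sequentially] by auto
qed

lemma constant_sgn:
  assumes "u 0 \<in> {-1, 0, 1}"
  shows "u n = sgn (u 0)"
proof -
  interpret neg: back_step_orbit k "\<lambda>n. - u n"
    by (rule uminus)
  consider "u 0 = 0" | "u 0 = 1" | "u 0 = -1"
    using assms by blast
  then show ?thesis
  proof cases
    case 1
    then show ?thesis using sgn_eq[of n] by (simp add: sgn_zero_iff)
  next
    case 2
    then show ?thesis using sgn_sub_one_eq[of n] by (simp add: sgn_zero_iff)
  next
    case 3
    then show ?thesis using neg.sgn_sub_one_eq[of n] by (simp add: sgn_zero_iff)
  qed
qed

end

theorem theorem2p4: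
  fixes eps h u0 :: real and u :: "nat \<Rightarrow> real"
  assumes eps: "0 < eps" "eps < 1"
    and h: "0 < h" "h \<le> eps^2"
    and init: "u 0 = u0"
    and scheme: "\<And>n. n \<ge> 1 \<Longrightarrow>
        (u n - u (n - 1)) / h + (1 / eps^2) * (u n ^ 3 - u n) = 0"
  shows "(u0 \<in> {0, 1, -1} \<longrightarrow> (\<forall>n\<ge>1. u n = sgn u0))
       \<and> (u0 \<notin> {0, 1, -1} \<longrightarrow> ((mono u \<or> antimono u) \<and> u \<longlonglongrightarrow> sgn u0))"
proof -
  interpret back_step_orbit "h * (1 / eps^2)" u
  proof
    show "0 < h * (1 / eps^2)" "h * (1 / eps^2) \<le> 1"
      using eps h by (simp_all add: pos_divide_le_eq)
    show "u n = back_step (h * (1 / eps^2)) (u (Suc n))" for n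
      using scheme[of "Suc n"] implicit_euler_step_iff[of h "u (Suc n)" "u n" "1 / eps^2"] h(1)
      by simp
  qed
  show ?thesis
  proof (rule conjI; rule impI)
    assume "u0 \<in> {0, 1, -1}"
    then show "\<forall>n\<ge>1. u n = sgn u0"
      using constant_sgn init by auto
  next
    assume "u0 \<notin> {0, 1, -1}"
    then show "(mono u \<or> antimono u) \<and> u \<longlonglongrightarrow> sgn u0"
      using monotone_tendsto_sgn init by auto
  qed
qed

end
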